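(* Let $n>2$ be an integer and let $S\subseteq\mathbb{F}_2^n$ be nonempty. Then $$|\Delta(S)|\ \ge\ \frac{\log|S|}{2\log n}.$$
   Context: For $x,y\in\mathbb{F}_2^n$, the Hamming distance is $d_H(x,y)=\#\{i:x_i\neq y_i\}$, and $\Delta(S)=\{d_H(x,y):x,y\in S\}$ (pairs with $x=y$ allowed). Logarithms are to any fixed base greater than 1. *)

theory Defs
  imports Complex_Main
begin

text \<open>Vectors of F_2^n are represented as boolean lists of length n.\<close>

definition cube :: "nat \<Rightarrow> bool list set" where
  "cube n = {x. length x = n}"

definition hamming :: "bool list \<Rightarrow> bool list \<Rightarrow> nat" where
  "hamming x y = card {i. i < length x \<and> i < length y \<and> x ! i \<noteq> y ! i}"

definition dist_set :: "bool list set \<Rightarrow> nat set" where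
  "dist_set S = {hamming x y | x y. x \<in> S \<and> y \<in> S}"

end

theory Submission
  imports Defs "HOL-Library.Function_Algebras"
begin

text \<open>
  Polynomial method. Let D be the distance set of S and E = D - {0}. For a in S the function
  F_a(x) = prod_{k in E} (d(x,a) - k) vanishes on S - {a} but not at a, so the F_a are
  linearly independent. On the cube, d(x,a) is an affine function of the coordinates x_i in {0,1},
  and x_i^2 = x_i, so every F_a is a combination of multilinear monomials of degree at most |E|.
  There are at most (n+1)^|E| <= n^(2|D|) of these, whence |S| <= n^(2|D|).
\<close>

definition scale_fun :: "real \<Rightarrow> ('a \<Rightarrow> real) \<Rightarrow> 'a \<Rightarrow> real" where
  "scale_fun c f = (\<lambda>x. c * f x)"

interpretation Fun: vector_space "scale_fun :: real \<Rightarrow> ('a \<Rightarrow> real) \<Rightarrow> 'a \<Rightarrow> real"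
  by unfold_locales (auto simp: scale_fun_def plus_fun_def algebra_simps)

lemma sum_fun_apply: "(sum f A) x = (\<Sum>a\<in>A. f a x)"
  by (induction A rule: infinite_finite_induct) (auto simp: plus_fun_def zero_fun_def)

lemma card_le_card_span_if_diagonal:
  fixes f :: "'a \<Rightarrow> 'a \<Rightarrow> real"
  assumes "finite S" "finite M"
    and span: "\<And>a. a \<in> S \<Longrightarrow> f a \<in> Fun.span M"
    and diag: "\<And>a. a \<in> S \<Longrightarrow> f a a \<noteq> 0"
    and off_diag: "\<And>a b. a \<in> S \<Longrightarrow> b \<in> S \<Longrightarrow> a \<noteq> b \<Longrightarrow> f a b = 0"
  shows "card S \<le> card M"
proof -
  have inj: "inj_on f S"
    by (rule inj_onI) (metis diag off_diag)
  have "Fun.independent (f ` S)"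
  proof (rule Fun.independent_if_scalars_zero)
    show "finite (f ` S)" using \<open>finite S\<close> by simp
    fix u g assume sum0: "(\<Sum>h\<in>f ` S. scale_fun (u h) h) = 0" and "g \<in> f ` S"
    then obtain a where a: "a \<in> S" "g = f a" by blast
    have "0 = (\<Sum>h\<in>f ` S. scale_fun (u h) h) a" using sum0 by (simp add: zero_fun_def)
    also have "\<dots> = (\<Sum>b\<in>S. u (f b) * f b a)"
      using sum.reindex[OF inj] by (simp add: sum_fun_apply scale_fun_def)
    also have "\<dots> = u (f a) * f a a"
      using off_diag a(1) \<open>finite S\<close> by (subst sum.remove[OF \<open>finite S\<close> a(1)]) auto
    finally show "u g = 0" using diag[OF a(1)] a(2) by simp
  qed
  then have "card (f ` S) \<le> card M"
    using Fun.independent_span_bound[OF \<open>finite M\<close>] span by blast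
  then show ?thesis using card_image[OF inj] by simp
qed

definition coord :: "bool list \<Rightarrow> nat \<Rightarrow> real" where
  "coord x i = (if x ! i then 1 else 0)"

text \<open>Monomials and annihilators are 0 off the cube, so identities between them need only be
  checked on the cube.\<close>

definition monomial :: "nat \<Rightarrow> nat set \<Rightarrow> bool list \<Rightarrow> real" where
  "monomial n I x = (if length x = n then \<Prod>i\<in>I. coord x i else 0)"

definition monomials :: "nat \<Rightarrow> nat \<Rightarrow> (bool list \<Rightarrow> real) set" where
  "monomials n k = monomial n ` {I. I \<subseteq> {..<n} \<and> card I \<le> k}"

lemma coord_mult_monomial:
  assumes "finite I"
  shows "coord x i * monomial n I x = monomial n (insert i I) x"
  using assms by (cases "i \<in> I") (auto simp: monomial_def coord_def insert_absorb)

lemma affine_mult_monomial_in_span: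
  assumes "I \<subseteq> {..<n}" "card I \<le> k"
  shows "(\<lambda>x. (c\<^sub>0 + (\<Sum>i<n. c i * coord x i)) * monomial n I x) \<in> Fun.span (monomials n (Suc k))"
proof -
  have "finite I" using assms(1) finite_subset by blast
  then have eq: "(\<lambda>x. (c\<^sub>0 + (\<Sum>i<n. c i * coord x i)) * monomial n I x) =
      scale_fun c\<^sub>0 (monomial n I) + (\<Sum>i<n. scale_fun (c i) (monomial n (insert i I)))"
    by (auto simp: fun_eq_iff sum_fun_apply scale_fun_def distrib_right sum_distrib_right
        mult.assoc coord_mult_monomial)
  have I_mem: "monomial n I \<in> monomials n (Suc k)"
    using assms by (auto simp: monomials_def)
  have insert_mem: "monomial n (insert i I) \<in> monomials n (Suc k)" if "i < n" for i
    using that assms \<open>finite I\<close> by (auto simp: monomials_def card_insert_if)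
  show ?thesis unfolding eq
    by (intro Fun.span_add Fun.span_sum Fun.span_scale Fun.span_base I_mem insert_mem) auto
qed

lemma affine_mult_in_span:
  assumes "f \<in> Fun.span (monomials n k)"
  shows "(\<lambda>x. (c\<^sub>0 + (\<Sum>i<n. c i * coord x i)) * f x) \<in> Fun.span (monomials n (Suc k))"
  using assms
proof (induction rule: Fun.span_induct_alt)
  case base
  then show ?case using Fun.span_zero by (simp add: zero_fun_def)
next
  case (step a g h)
  then obtain I where I: "I \<subseteq> {..<n}" "card I \<le> k" "g = monomial n I"
    by (auto simp: monomials_def)
  have "(\<lambda>x. (c\<^sub>0 + (\<Sum>i<n. c i * coord x i)) * (scale_fun a g + h) x) =
      scale_fun a (\<lambda>x. (c\<^sub>0 + (\<Sum>i<n. c i * coord x i)) * monomial n I x) +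
      (\<lambda>x. (c\<^sub>0 + (\<Sum>i<n. c i * coord x i)) * h x)"
    by (auto simp: scale_fun_def plus_fun_def algebra_simps I(3))
  then show ?case
    using affine_mult_monomial_in_span[OF I(1,2)] step by (simp add: Fun.span_add Fun.span_scale)
qed

lemma card_subsets_le_pow: "card {I. I \<subseteq> {..<n} \<and> card I \<le> k} \<le> (n + 1) ^ k"
proof -
  \<comment> \<open>pad the sorted list of elements of I with copies of the dummy element n\<close>
  have "{I. I \<subseteq> {..<n} \<and> card I \<le> k} \<subseteq> (\<lambda>xs. set xs - {n}) ` {xs. set xs \<subseteq> {..n} \<and> length xs = k}"
  proof
    fix I assume I: "I \<in> {I. I \<subseteq> {..<n} \<and> card I \<le> k}"
    then have "finite I" using finite_subset by blast
    let ?xs = "sorted_list_of_set I @ replicate (k - card I) n"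
    have "set ?xs \<subseteq> {..n}" "length ?xs = k" "set ?xs - {n} = I"
      using I \<open>finite I\<close> by auto
    then show "I \<in> (\<lambda>xs. set xs - {n}) ` {xs. set xs \<subseteq> {..n} \<and> length xs = k}"
      by blast
  qed
  then have "card {I. I \<subseteq> {..<n} \<and> card I \<le> k}
      \<le> card ((\<lambda>xs. set xs - {n}) ` {xs. set xs \<subseteq> {..n} \<and> length xs = k})"
    by (intro card_mono finite_imageI finite_lists_length_eq) simp_all
  also have "\<dots> \<le> card {xs. set xs \<subseteq> {..n} \<and> length xs = k}"
    by (intro card_image_le finite_lists_length_eq) simp
  finally show ?thesis by (simp add: card_lists_length_eq)
qed

lemma finite_monomials: "finite (monomials n k)"
  unfolding monomials_def by (rule finite_imageI, rule finite_subset[of _ "Pow {..<n}"]) auto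

lemma card_monomials_le: "card (monomials n k) \<le> (n + 1) ^ k"
proof -
  have "finite {I. I \<subseteq> {..<n} \<and> card I \<le> k}"
    by (rule finite_subset[of _ "Pow {..<n}"]) auto
  then have "card (monomials n k) \<le> card {I. I \<subseteq> {..<n} \<and> card I \<le> k}"
    unfolding monomials_def by (rule card_image_le)
  then show ?thesis using card_subsets_le_pow order_trans by blast
qed

lemma hamming_le_length: "hamming x y \<le> length x"
  unfolding hamming_def by (rule order_trans[OF card_mono[of "{..<length x}"]]) auto

lemma hamming_self [simp]: "hamming x x = 0"
  by (simp add: hamming_def)

lemma hamming_eq_0_imp_eq:
  assumes "length x = length y" "hamming x y = 0"
  shows "x = y"
proof -
  have "finite {i. i < length x \<and> i < length y \<and> x ! i \<noteq> y ! i}" by simp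
  then have "{i. i < length x \<and> i < length y \<and> x ! i \<noteq> y ! i} = {}"
    using assms(2) by (simp add: hamming_def)
  then show ?thesis using assms(1) by (auto intro: nth_equalityI)
qed

lemma hamming_affine:
  assumes "length x = n" "length a = n"
  shows "real (hamming x a) = (\<Sum>i<n. coord a i) + (\<Sum>i<n. (1 - 2 * coord a i) * coord x i)"
proof -
  have "{i. i < length x \<and> i < length a \<and> x ! i \<noteq> a ! i} = {i\<in>{..<n}. x ! i \<noteq> a ! i}"
    using assms by auto
  then have "real (hamming x a) = (\<Sum>i\<in>{i\<in>{..<n}. x ! i \<noteq> a ! i}. 1)"
    by (simp add: hamming_def)
  also have "\<dots> = (\<Sum>i<n. if x ! i \<noteq> a ! i then 1 else 0)"
    by (rule sum.inter_filter) simp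
  also have "\<dots> = (\<Sum>i<n. coord a i + (1 - 2 * coord a i) * coord x i)"
    by (intro sum.cong) (auto simp: coord_def)
  finally show ?thesis by (simp add: sum.distrib)
qed

definition annihilator :: "nat \<Rightarrow> nat set \<Rightarrow> bool list \<Rightarrow> bool list \<Rightarrow> real" where
  "annihilator n E a x = (if length x = n then \<Prod>k\<in>E. real (hamming x a) - real k else 0)"

lemma annihilator_in_span:
  assumes "finite E" "length a = n"
  shows "annihilator n E a \<in> Fun.span (monomials n (card E))"
  using assms(1)
proof (induction E rule: finite_induct)
  case empty
  have "annihilator n {} a = monomial n {}"
    by (auto simp: annihilator_def monomial_def)
  then show ?case by (auto simp: monomials_def intro: Fun.span_base)
next
  case (insert k E)
  have "annihilator n (insert k E) a = (\<lambda>x.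
      (((\<Sum>i<n. coord a i) - real k) + (\<Sum>i<n. (1 - 2 * coord a i) * coord x i)) * annihilator n E a x)"
    using insert(1,2) hamming_affine[OF _ assms(2)] by (auto simp: fun_eq_iff annihilator_def)
  then show ?case using affine_mult_in_span[OF insert(3)] insert(1,2) by simp
qed

lemma finite_cube_subset: "S \<subseteq> cube n \<Longrightarrow> finite S"
  unfolding cube_def using finite_lists_length_eq[of "UNIV :: bool set"] finite_subset by auto

lemma dist_set_subset: "S \<subseteq> cube n \<Longrightarrow> dist_set S \<subseteq> {..n}"
  using hamming_le_length by (fastforce simp: dist_set_def cube_def)

lemma card_le_pow_card_nonzero_dist_set:
  assumes "S \<subseteq> cube n"
  shows "card S \<le> (n + 1) ^ card (dist_set S - {0})"
proof -
  define E where "E = dist_set S - {0}"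
  have "finite E"
    using dist_set_subset[OF assms] finite_subset unfolding E_def by blast
  have len: "length a = n" if "a \<in> S" for a
    using assms that by (auto simp: cube_def)
  have "card S \<le> card (monomials n (card E))"
  proof (rule card_le_card_span_if_diagonal[of S _ "annihilator n E"])
    fix a b assume "a \<in> S" "b \<in> S" "a \<noteq> b"
    then have "hamming b a \<in> E"
      using hamming_eq_0_imp_eq[of b a] len by (auto simp: E_def dist_set_def)
    then show "annihilator n E a b = 0"
      using \<open>finite E\<close> len \<open>b \<in> S\<close> by (auto simp: annihilator_def)
  qed (use finite_cube_subset[OF assms] finite_monomials annihilator_in_span[OF \<open>finite E\<close>] len
        \<open>finite E\<close> in \<open>auto simp: annihilator_def E_def\<close>)
  then show ?thesis using card_monomials_le unfolding E_def by (rule order_trans)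
qed

lemma card_le_pow_card_dist_set:
  assumes "S \<subseteq> cube n" "S \<noteq> {}" "n \<ge> 2"
  shows "card S \<le> n ^ (2 * card (dist_set S))"
proof -
  have "finite (dist_set S)"
    using dist_set_subset[OF assms(1)] finite_subset by blast
  moreover obtain x where "x \<in> S"
    using assms(2) by blast
  then have "0 \<in> dist_set S"
    unfolding dist_set_def by (metis (mono_tags, lifting) hamming_self mem_Collect_eq)
  ultimately have card_nonzero: "card (dist_set S - {0}) = card (dist_set S) - 1"
    by simp
  have succ_le_square: "n + 1 \<le> n ^ 2"
    unfolding power2_eq_square using mult_le_mono1[OF assms(3), of n] assms(3) by linarith
  have "card S \<le> (n + 1) ^ (card (dist_set S) - 1)"
    using card_le_pow_card_nonzero_dist_set[OF assms(1)] card_nonzero by simp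
  also have "\<dots> \<le> (n ^ 2) ^ (card (dist_set S) - 1)"
    using succ_le_square by (rule power_mono) simp
  also have "\<dots> \<le> (n ^ 2) ^ card (dist_set S)"
    by (rule power_increasing) (use assms(3) in auto)
  finally show ?thesis by (simp add: power_mult)
qed

theorem lemma3p1:
  fixes n :: nat and S :: "bool list set" and b :: real
  assumes "n > 2" and "b > 1"
    and "S \<subseteq> cube n" and "S \<noteq> {}"
  shows "real (card (dist_set S)) \<ge> log b (real (card S)) / (2 * log b (real n))"
proof -
  have "card S \<ge> 1"
    using finite_cube_subset[OF assms(3)] assms(4) by (simp add: Suc_le_eq card_gt_0_iff)
  moreover have "real (card S) \<le> real n ^ (2 * card (dist_set S))"
    using card_le_pow_card_dist_set[OF assms(3,4)] assms(1) of_nat_le_iff by fastforce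
  ultimately have "log b (real (card S)) \<le> log b (real n ^ (2 * card (dist_set S)))"
    using assms(1,2) by (subst log_le_cancel_iff) auto
  also have "\<dots> = 2 * real (card (dist_set S)) * log b (real n)"
    using assms(1) by (simp add: log_nat_power)
  finally show ?thesis
    using assms(1,2) by (simp add: divide_le_eq mult_ac)
qed

end
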